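(* Let $G$ be a bipartite graph of order $n$. Then $$Mo(G) \leq \alpha_1(1-\alpha_1)(1-2\alpha_1)n^3=\frac{\sqrt{3}}{18}n^3,$$ where $\alpha_1=\frac{1}{2}\left(1-\frac{1}{\sqrt{3}}\right)$.
   Context: All graphs are finite and simple. For a graph $G$ and an edge $uv$ of $G$, $n_G(u,v)$ denotes the number of vertices of $G$ whose distance in $G$ to $u$ is strictly smaller than their distance in $G$ to $v$. The Mostar index of $G$ is $Mo(G)=\sum_{uv\in E(G)}|n_G(u,v)-n_G(v,u)|$. *)

theory Defs
  imports Complex_Main "HOL-Library.Extended_Nat"
begin

definition simple_graph :: "'a set \<Rightarrow> ('a \<Rightarrow> 'a \<Rightarrow> bool) \<Rightarrow> bool" where
  "simple_graph V E \<longleftrightarrow> finite V \<and> (\<forall>x y. E x y \<longrightarrow> x \<in> V \<and> y \<in> V)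
     \<and> (\<forall>x y. E x y \<longrightarrow> E y x) \<and> (\<forall>x. \<not> E x x)"

definition bipartite :: "'a set \<Rightarrow> ('a \<Rightarrow> 'a \<Rightarrow> bool) \<Rightarrow> bool" where
  "bipartite V E \<longleftrightarrow> (\<exists>A B. A \<union> B = V \<and> A \<inter> B = {} \<and>
     (\<forall>x y. E x y \<longrightarrow> (x \<in> A \<and> y \<in> B) \<or> (x \<in> B \<and> y \<in> A)))"

fun walk :: "('a \<Rightarrow> 'a \<Rightarrow> bool) \<Rightarrow> 'a list \<Rightarrow> bool" where
  "walk E [] = False"
| "walk E [x] = True"
| "walk E (x # y # xs) = (E x y \<and> walk E (y # xs))"

text \<open>Graph distance (infinite if no walk exists).\<close>
definition gdist :: "('a \<Rightarrow> 'a \<Rightarrow> bool) \<Rightarrow> 'a \<Rightarrow> 'a \<Rightarrow> enat" where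
  "gdist E u v = (INF xs \<in> {xs. walk E xs \<and> hd xs = u \<and> last xs = v}. enat (length xs - 1))"

definition n_closer :: "'a set \<Rightarrow> ('a \<Rightarrow> 'a \<Rightarrow> bool) \<Rightarrow> 'a \<Rightarrow> 'a \<Rightarrow> nat" where
  "n_closer V E u v = card {w \<in> V. gdist E w u < gdist E w v}"

text \<open>Mostar index: sum over unordered edges; summing over ordered adjacent pairs
counts each edge twice (the summand is symmetric), hence the division by 2.\<close>
definition mostar :: "'a set \<Rightarrow> ('a \<Rightarrow> 'a \<Rightarrow> bool) \<Rightarrow> real" where
  "mostar V E = (\<Sum>(u,v)\<in>{(u,v) \<in> V \<times> V. E u v}.
       \<bar>real (n_closer V E u v) - real (n_closer V E v u)\<bar>) / 2"

end

theory Submission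
  imports Defs
begin

text \<open>In a triangle-free graph, for an edge uv the vertex u and all its neighbours
other than v are closer to u than to v. Hence n(u,v) \<ge> deg u, n(v,u) \<ge> deg v and
n(u,v) + n(v,u) \<le> n, so the contribution of uv is at most n - 2 min(deg u, deg v).
Splitting this bound into a sum of two vertex terms and double counting bounds Mo(G)
by a sum over vertices of a function of the degree alone. In a bipartite graph with
parts of sizes a and b every degree is bounded by the size of the opposite part,
which leaves an inequality in a and b whose extremal case is the complete bipartite
graph K(a,b), with Mo = ab|a - b| maximal for a = \<alpha>_1 n.\<close>

lemma gdist_le_length:
  assumes "walk E xs"
  shows "gdist E (hd xs) (last xs) \<le> enat (length xs - 1)"
  unfolding gdist_def using assms by (intro INF_lower) auto

lemma gdist_self: "gdist E u u = 0"
  using gdist_le_length[of E "[u]"] by (simp add: zero_enat_def[symmetric])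

lemma gdist_le_1_if_adjacent: "E u v \<Longrightarrow> gdist E u v \<le> 1"
  using gdist_le_length[of E "[u, v]"] by (simp add: one_enat_def)

lemma gdist_ge_1_if_distinct:
  assumes "u \<noteq> v"
  shows "1 \<le> gdist E u v"
  unfolding gdist_def one_enat_def
proof (rule INF_greatest)
  fix xs assume "xs \<in> {xs. walk E xs \<and> hd xs = u \<and> last xs = v}"
  with assms have "length xs \<ge> 2"
    by (cases xs; cases "tl xs") auto
  then show "enat 1 \<le> enat (length xs - 1)" by simp
qed

lemma gdist_ge_2_if_nonadjacent:
  assumes "u \<noteq> v" "\<not> E u v"
  shows "2 \<le> gdist E u v"
  unfolding gdist_def numeral_eq_enat
proof (rule INF_greatest)
  fix xs assume "xs \<in> {xs. walk E xs \<and> hd xs = u \<and> last xs = v}"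
  with assms have "length xs \<ge> 3"
    by (cases xs; cases "tl xs"; cases "tl (tl xs)") auto
  then show "enat 2 \<le> enat (length xs - 1)" by simp
qed

definition degree :: "'a set \<Rightarrow> ('a \<Rightarrow> 'a \<Rightarrow> bool) \<Rightarrow> 'a \<Rightarrow> nat" where
  "degree V E u = card {v \<in> V. E u v}"

definition triangle_free :: "('a \<Rightarrow> 'a \<Rightarrow> bool) \<Rightarrow> bool" where
  "triangle_free E \<longleftrightarrow> (\<forall>x y z. E x y \<and> E y z \<longrightarrow> \<not> E x z)"

lemma bipartite_imp_triangle_free: "bipartite V E \<Longrightarrow> triangle_free E"
  unfolding bipartite_def triangle_free_def by blast

lemma degree_le_n_closer:
  assumes G: "simple_graph V E" and "triangle_free E" and "E u v"
  shows "degree V E u \<le> n_closer V E u v"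
proof -
  have fin: "finite V" and "u \<noteq> v" and "v \<in> V"
    and sym: "\<And>x y. E x y \<Longrightarrow> E y x"
    using G \<open>E u v\<close> unfolding simple_graph_def by auto
  let ?N = "{w \<in> V. E u w}"
  have "insert u (?N - {v}) \<subseteq> {w \<in> V. gdist E w u < gdist E w v}"
  proof
    fix w assume w: "w \<in> insert u (?N - {v})"
    show "w \<in> {w \<in> V. gdist E w u < gdist E w v}"
    proof (cases "w = u")
      case True
      then show ?thesis
        using G \<open>E u v\<close> \<open>u \<noteq> v\<close> gdist_ge_1_if_distinct[of u v E]
        by (auto simp: gdist_self simple_graph_def)
    next
      case False
      with w have "w \<in> V" "E w u" "w \<noteq> v" by (auto intro: sym)
      have "\<not> E w v"
        using \<open>triangle_free E\<close> \<open>E w u\<close> \<open>E u v\<close> unfolding triangle_free_def by blast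
      have "gdist E w u \<le> 1" using \<open>E w u\<close> by (rule gdist_le_1_if_adjacent)
      also have "\<dots> < 2" by simp
      also have "\<dots> \<le> gdist E w v"
        using \<open>w \<noteq> v\<close> \<open>\<not> E w v\<close> by (rule gdist_ge_2_if_nonadjacent)
      finally show ?thesis using \<open>w \<in> V\<close> by simp
    qed
  qed
  then have "card (insert u (?N - {v})) \<le> n_closer V E u v"
    unfolding n_closer_def using fin by (intro card_mono) auto
  moreover have "card (insert u (?N - {v})) = card ?N"
  proof -
    have "u \<notin> ?N" "v \<in> ?N" "finite ?N"
      using G \<open>E u v\<close> \<open>v \<in> V\<close> fin unfolding simple_graph_def by auto
    then have "card (insert u (?N - {v})) = Suc (card (?N - {v}))"
      by (intro card_insert_disjoint) auto
    also have "\<dots> = card ?N" using card.remove[of ?N v] \<open>v \<in> ?N\<close> \<open>finite ?N\<close> by simp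
    finally show ?thesis .
  qed
  ultimately show ?thesis unfolding degree_def by simp
qed

lemma n_closer_add_le_card:
  assumes "finite V"
  shows "n_closer V E u v + n_closer V E v u \<le> card V"
proof -
  have "n_closer V E u v + n_closer V E v u =
      card ({w \<in> V. gdist E w u < gdist E w v} \<union> {w \<in> V. gdist E w v < gdist E w u})"
    unfolding n_closer_def using assms by (subst card_Un_disjoint) auto
  also have "\<dots> \<le> card V" using assms by (intro card_mono) auto
  finally show ?thesis .
qed

lemma sum_arcs_ends:
  fixes f :: "'a \<Rightarrow> real"
  assumes "finite V" and "\<And>x y. E x y \<Longrightarrow> E y x"
  shows "(\<Sum>(u, v)\<in>{(u, v) \<in> V \<times> V. E u v}. f u + f v) = 2 * (\<Sum>u\<in>V. degree V E u * f u)"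
proof -
  let ?A = "{(u, v) \<in> V \<times> V. E u v}"
  have "(\<Sum>(u, v)\<in>?A. f v) = (\<Sum>(u, v)\<in>?A. f u)"
    using assms(2) by (intro sum.reindex_bij_witness[of _ prod.swap prod.swap]) auto
  moreover have "(\<Sum>(u, v)\<in>?A. f u) = (\<Sum>u\<in>V. \<Sum>v\<in>{v \<in> V. E u v}. f u)"
    using assms(1) by (subst sum.Sigma) (auto intro: sum.cong)
  ultimately show ?thesis
    by (simp add: sum.distrib case_prod_beta degree_def)
qed

text \<open>The constants 1/8 and 3/8 are tuned so that the estimates 49/512 and
1575/16384 in load_cap_bound stay below sqrt 3 / 18 = 0.0962...\<close>

definition share :: "real \<Rightarrow> real \<Rightarrow> real" where
  "share N d = N/8 + 2 * max 0 (3*N/8 - d)"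

definition load :: "real \<Rightarrow> real \<Rightarrow> real" where
  "load N d = d * share N d"

lemma abs_diff_le_share_add_share:
  fixes x y du dv N :: real
  assumes "du \<le> x" "dv \<le> y" "x + y \<le> N"
  shows "\<bar>x - y\<bar> \<le> share N du + share N dv"
  using assms unfolding share_def abs_le_iff max_def by auto

lemma mostar_le_sum_load:
  assumes G: "simple_graph V E" and "triangle_free E"
  shows "mostar V E \<le> (\<Sum>u\<in>V. load (card V) (degree V E u))"
proof -
  have fin: "finite V" and sym: "\<And>x y. E x y \<Longrightarrow> E y x"
    using G unfolding simple_graph_def by auto
  let ?A = "{(u, v) \<in> V \<times> V. E u v}"
  let ?s = "\<lambda>u. share (card V) (degree V E u)"
  have "\<bar>real (n_closer V E u v) - real (n_closer V E v u)\<bar> \<le> ?s u + ?s v"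
    if "E u v" for u v
  proof (rule abs_diff_le_share_add_share)
    show "real (degree V E u) \<le> real (n_closer V E u v)"
      using degree_le_n_closer[OF G \<open>triangle_free E\<close> \<open>E u v\<close>] by simp
    show "real (degree V E v) \<le> real (n_closer V E v u)"
      using degree_le_n_closer[OF G \<open>triangle_free E\<close> sym[OF \<open>E u v\<close>]] by simp
    show "real (n_closer V E u v) + real (n_closer V E v u) \<le> real (card V)"
      using n_closer_add_le_card[OF fin, of E u v] by linarith
  qed
  then have "mostar V E \<le> (\<Sum>(u, v)\<in>?A. ?s u + ?s v) / 2"
    unfolding mostar_def by (intro divide_right_mono sum_mono) auto
  also have "\<dots> = (\<Sum>u\<in>V. load (card V) (degree V E u))"
    using sum_arcs_ends[OF fin sym, where f = ?s] unfolding load_def by simp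
  finally show ?thesis .
qed

text \<open>The running maximum of load N over degrees in [0, c].\<close>

definition load_cap :: "real \<Rightarrow> real \<Rightarrow> real" where
  "load_cap N c =
    (if c \<le> 7*N/32 then c * (7*N/8 - 2*c) else if c \<le> 49*N/64 then 49*N^2/512 else c*N/8)"

lemma load_le_max: "load N d \<le> max (49*N^2/512) (d*N/8)"
proof (cases "d \<le> 3*N/8")
  case True
  then have "load N d = d * (7*N/8 - 2*d)"
    unfolding load_def share_def by (simp add: algebra_simps)
  also have "\<dots> = 49*N^2/512 - 2 * (d - 7*N/32)^2"
    by (simp add: power2_eq_square algebra_simps)
  finally show ?thesis by (simp add: le_max_iff_disj)
next
  case False
  then show ?thesis unfolding load_def share_def by simp
qed

lemma load_le_load_cap:
  assumes "d \<le> c" "0 \<le> N"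
  shows "load N d \<le> load_cap N c"
proof -
  consider "c \<le> 7*N/32" | "7*N/32 < c" "c \<le> 49*N/64" | "49*N/64 < c" by linarith
  then show ?thesis
  proof cases
    case 1
    then have "load N d = d * (7*N/8 - 2*d)"
      using assms unfolding load_def share_def by (simp add: algebra_simps)
    also have "\<dots> = c * (7*N/8 - 2*c) - (c - d) * (7*N/8 - 2*(c + d))"
      by (simp add: field_simps)
    also have "\<dots> \<le> c * (7*N/8 - 2*c)"
      using 1 assms by simp
    finally show ?thesis using 1 unfolding load_cap_def by simp
  next
    case 2
    have "d*N/8 \<le> 49*N^2/512"
      using 2 assms mult_right_mono[of d "49*N/64" N] by (simp add: power2_eq_square)
    then show ?thesis using 2 load_le_max[of N d] unfolding load_cap_def by simp
  next
    case 3
    have "49*N^2/512 \<le> c*N/8" "d*N/8 \<le> c*N/8"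
      using 3 assms mult_right_mono[of "49*N/64" c N] mult_right_mono[of d c N]
      by (simp_all add: power2_eq_square)
    moreover have "load_cap N c = c*N/8"
      using 3 assms unfolding load_cap_def by auto
    ultimately show ?thesis using load_le_max[of N d] by simp
  qed
qed

lemma sqrt_3_ge: "1.7304 \<le> sqrt (3::real)"
  by (rule real_le_rsqrt) (simp add: power2_eq_square)

text \<open>The left-hand side is Mo(K(a,b)); equality holds for a = \<alpha>_1 (a + b),
where \<alpha>_1 = (s - 1) / (2 s) with s = sqrt 3.\<close>

lemma mult_mult_abs_diff_le:
  fixes a b :: real
  assumes "0 \<le> a" "0 \<le> b"
  shows "a * b * \<bar>a - b\<bar> \<le> sqrt 3 / 18 * (a + b)^3"
proof -
  have "a * b * (b - a) \<le> sqrt 3 / 18 * (a + b)^3" if "0 \<le> a" "a \<le> b" for a b :: real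
  proof -
    define s where "s = sqrt (3::real)"
    have "s > 0" "s^2 = 3" unfolding s_def by simp_all
    have s3: "s * (s * x) = 3 * x" for x
      using \<open>s^2 = 3\<close> by (simp add: power2_eq_square flip: mult.assoc)
    have "s / 18 * (a + b)^3 - a * b * (b - a)
        = 2 * (a - (s - 1) / (2*s) * (a + b))^2 * ((1/2 + 1/s) * (a + b) - a)"
      using \<open>s > 0\<close> \<open>s^2 = 3\<close>
      by (simp add: field_simps power2_eq_square power3_eq_cube s3)
    moreover have "(1/2 + 1/s) * (a + b) - a = (b - a) / 2 + (a + b) / s"
      by (simp add: field_simps)
    then have "(1/2 + 1/s) * (a + b) - a \<ge> 0"
      using that \<open>s > 0\<close> by simp
    ultimately have "0 \<le> s / 18 * (a + b)^3 - a * b * (b - a)"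
      by simp
    then show ?thesis unfolding s_def by simp
  qed
  from this[of a b] this[of b a] assms show ?thesis
    by (cases "a \<le> b") (simp_all add: abs_if algebra_simps)
qed

lemma load_cap_bound:
  assumes "0 \<le> a" "0 \<le> b" "a + b = N"
  shows "a * load_cap N b + b * load_cap N a \<le> sqrt 3 / 18 * N^3"
proof -
  have *: "a * load_cap N b + b * load_cap N a \<le> sqrt 3 / 18 * N^3"
    if "0 \<le> a" "a \<le> b" "a + b = N" for a b
  proof -
    consider "a \<le> 7*N/32" | "7*N/32 < a" "b \<le> 49*N/64" | "7*N/32 < a" "49*N/64 < b"
      by linarith
    then show ?thesis
    proof cases
      case 1
      then have "a * load_cap N b + b * load_cap N a = a * b * (b - a)"
        using that unfolding load_cap_def by (auto simp: algebra_simps)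
      also have "\<dots> = a * b * \<bar>a - b\<bar>"
        using that by simp
      also have "\<dots> \<le> sqrt 3 / 18 * N^3"
        using mult_mult_abs_diff_le[of a b] that by simp
      finally show ?thesis .
    next
      case 2
      then have "a * load_cap N b + b * load_cap N a = 49/512 * N^3"
        using that unfolding load_cap_def by (auto simp: power2_eq_square power3_eq_cube algebra_simps)
      also have "\<dots> \<le> sqrt 3 / 18 * N^3"
        using sqrt_3_ge that by (intro mult_right_mono) auto
      finally show ?thesis .
    next
      case 3
      then have "a * load_cap N b + b * load_cap N a = a * b * N/8 + b * 49*N^2/512"
        using that unfolding load_cap_def by auto
      also have "\<dots> = 1575/16384 * N^3 - N/512 * (a - 7*N/32) * (64*a - N)"
        using that by (simp add: power2_eq_square power3_eq_cube field_simps flip: \<open>a + b = N\<close>)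
      also have "\<dots> \<le> 1575/16384 * N^3"
        using 3 that by simp
      also have "\<dots> \<le> sqrt 3 / 18 * N^3"
        using sqrt_3_ge that by (intro mult_right_mono) auto
      finally show ?thesis .
    qed
  qed
  show ?thesis
    using *[of a b] *[of b a] assms by (cases "a \<le> b") (simp_all add: add.commute)
qed

lemma sum_load_le_bipartition:
  assumes "finite V" "A \<union> B = V" "A \<inter> B = {}"
    and "\<forall>x y. E x y \<longrightarrow> (x \<in> A \<and> y \<in> B) \<or> (x \<in> B \<and> y \<in> A)" and "0 \<le> N"
  shows "(\<Sum>u\<in>V. load N (degree V E u)) \<le> card A * load_cap N (card B) + card B * load_cap N (card A)"
proof -
  have fin: "finite A" "finite B" using assms(1,2) by auto
  have deg_A: "degree V E u \<le> card B" if "u \<in> A" for u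
    unfolding degree_def using assms(3,4) that fin by (intro card_mono) auto
  have deg_B: "degree V E u \<le> card A" if "u \<in> B" for u
    unfolding degree_def using assms(3,4) that fin by (intro card_mono) auto
  have "(\<Sum>u\<in>V. load N (degree V E u)) = (\<Sum>u\<in>A. load N (degree V E u)) + (\<Sum>u\<in>B. load N (degree V E u))"
    using sum.union_disjoint[OF fin assms(3)] assms(2) by simp
  also have "\<dots> \<le> (\<Sum>u\<in>A. load_cap N (card B)) + (\<Sum>u\<in>B. load_cap N (card A))"
    using deg_A deg_B \<open>0 \<le> N\<close> by (intro add_mono sum_mono load_le_load_cap) auto
  finally show ?thesis by simp
qed

lemma alpha_cubic:
  assumes "\<alpha> = (1 - 1 / sqrt 3) / 2"
  shows "\<alpha> * (1 - \<alpha>) * (1 - 2 * \<alpha>) = sqrt 3 / 18"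
proof -
  define s where "s = sqrt (3::real)"
  have "s > 0" "s * s = 3" unfolding s_def by simp_all
  then have s3: "s * (s * x) = 3 * x" for x by (simp flip: mult.assoc)
  show ?thesis unfolding assms s_def[symmetric] using \<open>s > 0\<close> \<open>s * s = 3\<close>
    by (simp add: field_simps s3)
qed

theorem theorem1:
  fixes V :: "'a set" and E :: "'a \<Rightarrow> 'a \<Rightarrow> bool" and n :: nat and \<alpha>\<^sub>1 :: real
  assumes "simple_graph V E" and "bipartite V E" and "n = card V"
    and "\<alpha>\<^sub>1 = (1 - 1 / sqrt 3) / 2"
  shows "mostar V E \<le> \<alpha>\<^sub>1 * (1 - \<alpha>\<^sub>1) * (1 - 2 * \<alpha>\<^sub>1) * real n ^ 3
         \<and> \<alpha>\<^sub>1 * (1 - \<alpha>\<^sub>1) * (1 - 2 * \<alpha>\<^sub>1) * real n ^ 3 = sqrt 3 / 18 * real n ^ 3"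
proof -
  obtain A B where AB: "A \<union> B = V" "A \<inter> B = {}"
    "\<forall>x y. E x y \<longrightarrow> (x \<in> A \<and> y \<in> B) \<or> (x \<in> B \<and> y \<in> A)"
    using \<open>bipartite V E\<close> unfolding bipartite_def by blast
  have fin: "finite V" using \<open>simple_graph V E\<close> unfolding simple_graph_def by simp
  then have "card A + card B = n"
    using AB \<open>n = card V\<close> card_Un_disjoint[of A B] by (metis finite_Un)
  then have parts: "real (card A) + real (card B) = real n" by linarith
  have "mostar V E \<le> (\<Sum>u\<in>V. load n (degree V E u))"
    using mostar_le_sum_load \<open>simple_graph V E\<close> bipartite_imp_triangle_free[OF \<open>bipartite V E\<close>]
      \<open>n = card V\<close> by blast
  also have "\<dots> \<le> card A * load_cap n (card B) + card B * load_cap n (card A)"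
    using sum_load_le_bipartition[OF fin AB] by simp
  also have "\<dots> \<le> sqrt 3 / 18 * real n ^ 3"
    using load_cap_bound[OF _ _ parts] by simp
  finally show ?thesis unfolding alpha_cubic[OF \<open>\<alpha>\<^sub>1 = (1 - 1 / sqrt 3) / 2\<close>] by simp
qed

end
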